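(* Let $T$ be a tree rooted at a vertex $v$ and let $\bar T$ be a pruning of $T$ (as defined in the context). Then for every maximum dissociation set $\bar F$ of $\bar T$ there exists a maximum dissociation set $F$ of $T$ such that $v\in F$ if and only if $v\in \bar F$. Conversely, for every maximum dissociation set $F$ of $T$ there exists a maximum dissociation set $\bar F$ of $\bar T$ such that $v\in \bar F$ if and only if $v\in F$.
   Context: All graphs are finite, simple and undirected. A dissociation set of a graph $G$ is a set $F\subseteq V(G)$ such that $G[F]$ has maximum degree at most $1$; a maximum dissociation set is one of maximum cardinality. In a rooted tree, for a vertex $u$, $C(u)$ is the set of children of $u$, $D[u]$ is the set consisting of $u$ and all its descendants, and $T_u$ is the subtree induced by $D[u]$. A branch vertex is a vertex of degree at least $3$. Pruning: let $T$ be rooted at $v$. While the current tree has a branch vertex different from $v$, choose such a branch vertex $u\ne v$ at maximum distance from $v$; then every proper descendant of $u$ has degree at most $2$, so for each child $w$ of $u$ the subtree $T_w$ is a path with end vertex $w$, and for $i\in\{0,1,2\}$ let $C^i(u)$ be the set of children $w$ of $u$ such that $|V(T_w)|\equiv i \pmod 3$. Perform the following step (a pruning at $u$): if $|C^2(u)|\ge 1$ or $|C^1(u)|\ge 2$, delete all vertices of $D[u]$; if $|C^2(u)|=0$ and $|C^1(u)|\le 1$, delete all vertices of $D[w]$ for every $w\in C(u)\setminus\{z\}$, where $z$ is the unique vertex of $C^1(u)$ if $|C^1(u)|=1$ and $z$ is an arbitrary child of $u$ otherwise. When no branch vertex other than $v$ remains, the resulting tree $\bar T$ (rooted at $v$,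 in which every vertex other than $v$ has degree at most $2$) is called a pruning of $T$. *)

theory Defs
  imports Main
begin

definition simple_graph :: "'a set \<Rightarrow> 'a set set \<Rightarrow> bool" where
  "simple_graph V E \<longleftrightarrow> finite V \<and> (\<forall>e\<in>E. \<exists>a b. a \<noteq> b \<and> a \<in> V \<and> b \<in> V \<and> e = {a, b})"

definition is_path :: "'a set \<Rightarrow> 'a set set \<Rightarrow> 'a list \<Rightarrow> bool" where
  "is_path V E ps \<longleftrightarrow> ps \<noteq> [] \<and> distinct ps \<and> set ps \<subseteq> V \<and>
     (\<forall>i. Suc i < length ps \<longrightarrow> {ps ! i, ps ! Suc i} \<in> E)"

definition is_cycle :: "'a set \<Rightarrow> 'a set set \<Rightarrow> 'a list \<Rightarrow> bool" where
  "is_cycle V E ps \<longleftrightarrow> is_path V E ps \<and> length ps \<ge> 3 \<and> {last ps, hd ps} \<in> E"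

definition connected_graph :: "'a set \<Rightarrow> 'a set set \<Rightarrow> bool" where
  "connected_graph V E \<longleftrightarrow>
     (\<forall>a\<in>V. \<forall>b\<in>V. \<exists>ps. is_path V E ps \<and> hd ps = a \<and> last ps = b)"

definition is_tree :: "'a set \<Rightarrow> 'a set set \<Rightarrow> bool" where
  "is_tree V E \<longleftrightarrow> simple_graph V E \<and> V \<noteq> {} \<and> connected_graph V E \<and>
     \<not> (\<exists>ps. is_cycle V E ps)"

definition ind :: "'a set set \<Rightarrow> 'a set \<Rightarrow> 'a set set" where
  "ind E S = {e \<in> E. e \<subseteq> S}"

definition deg :: "'a set set \<Rightarrow> 'a \<Rightarrow> nat" where
  "deg E u = card {w. {u, w} \<in> E}"

definition dissociation_set :: "'a set \<Rightarrow> 'a set set \<Rightarrow> 'a set \<Rightarrow> bool" where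
  "dissociation_set V E F \<longleftrightarrow> F \<subseteq> V \<and> (\<forall>x\<in>F. card {y\<in>F. {x, y} \<in> E} \<le> 1)"

definition max_dissociation_set :: "'a set \<Rightarrow> 'a set set \<Rightarrow> 'a set \<Rightarrow> bool" where
  "max_dissociation_set V E F \<longleftrightarrow> dissociation_set V E F \<and>
     (\<forall>F'. dissociation_set V E F' \<longrightarrow> card F' \<le> card F)"

definition desc :: "'a set \<Rightarrow> 'a set set \<Rightarrow> 'a \<Rightarrow> 'a \<Rightarrow> 'a set" where
  "desc V E r u = {w. \<exists>ps. is_path V E ps \<and> hd ps = r \<and> last ps = w \<and> u \<in> set ps}"

definition children :: "'a set \<Rightarrow> 'a set set \<Rightarrow> 'a \<Rightarrow> 'a \<Rightarrow> 'a set" where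
  "children V E r u = {w. {u, w} \<in> E \<and> w \<in> desc V E r u \<and> w \<noteq> u}"

definition dist :: "'a set \<Rightarrow> 'a set set \<Rightarrow> 'a \<Rightarrow> 'a \<Rightarrow> nat" where
  "dist V E a b = (LEAST n. \<exists>ps. is_path V E ps \<and> hd ps = a \<and> last ps = b \<and> length ps = Suc n)"

definition children_mod :: "'a set \<Rightarrow> 'a set set \<Rightarrow> 'a \<Rightarrow> 'a \<Rightarrow> nat \<Rightarrow> 'a set" where
  "children_mod V E r u i = {w \<in> children V E r u. card (desc V E r w) mod 3 = i}"

text \<open>One pruning step of the current tree T[S] (rooted at r), where T = (V,E) is the
  original tree; the current tree is always an induced subgraph, described by its vertex set.\<close>
definition prune_step :: "'a set set \<Rightarrow> 'a \<Rightarrow> 'a set \<Rightarrow> 'a set \<Rightarrow> bool" where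
  "prune_step E r S S' \<longleftrightarrow>
    (\<exists>u. u \<in> S \<and> u \<noteq> r \<and> deg (ind E S) u \<ge> 3 \<and>
       (\<forall>u'\<in>S. u' \<noteq> r \<and> deg (ind E S) u' \<ge> 3 \<longrightarrow> dist S (ind E S) r u' \<le> dist S (ind E S) r u) \<and>
       (let C = children S (ind E S) r u;
            C1 = children_mod S (ind E S) r u 1;
            C2 = children_mod S (ind E S) r u 2 in
        ((card C2 \<ge> 1 \<or> card C1 \<ge> 2) \<and> S' = S - desc S (ind E S) r u) \<or>
        (card C2 = 0 \<and> card C1 \<le> 1 \<and>
          (\<exists>z\<in>C. (card C1 = 1 \<longrightarrow> C1 = {z}) \<and>
             S' = S - (\<Union>w\<in>C - {z}. desc S (ind E S) r w)))))"

definition is_pruning :: "'a set \<Rightarrow> 'a set set \<Rightarrow> 'a \<Rightarrow> 'a set \<Rightarrow> bool" where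
  "is_pruning V E r S \<longleftrightarrow> (prune_step E r)\<^sup>*\<^sup>* V S \<and>
     \<not> (\<exists>u\<in>S. u \<noteq> r \<and> deg (ind E S) u \<ge> 3)"

end

(* Each pruning step deletes from the current tree a set X of vertices that is closed under
   descendants and avoids the root: all of T_u, or the subtrees T_w of the children w of u other
   than z.  Below the branch vertex u every T_w is a path hanging from u, and X carries an explicit
   dissociation set FX: all vertices of these paths except every third one, the phase chosen so
   that the vertices of X outside FX (u among them if all of T_u goes) can be covered by pairwise
   disjoint paths on three vertices inside X.  Every vertex of FX has its parent in X, so
   F' \<union> FX is a dissociation set of T whenever F' is one of T - X; and each of the disjoint
   three-vertex paths misses a vertex of any dissociation set F, so |F \<inter> X| \<le> |FX|.  Hence
   F \<mapsto> F - X and F' \<mapsto> F' \<union> FX map maximum dissociation sets of T and of T - X to each other,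
   and neither map changes whether the root belongs to the set. *)

theory Submission
  imports Defs
begin

section \<open>Paths in acyclic graphs\<close>

lemma is_path_iff_successively:
  "is_path V E ps \<longleftrightarrow>
     ps \<noteq> [] \<and> distinct ps \<and> set ps \<subseteq> V \<and> successively (\<lambda>x y. {x, y} \<in> E) ps"
  unfolding is_path_def successively_conv_nth by blast

lemma successively_take: "successively P xs \<Longrightarrow> successively P (take i xs)"
  by (metis append_take_drop_id successively_append_iff)

lemma successively_drop: "successively P xs \<Longrightarrow> successively P (drop i xs)"
  by (metis append_take_drop_id successively_append_iff)

lemma is_path_take: "is_path V E ps \<Longrightarrow> 0 < k \<Longrightarrow> is_path V E (take k ps)"
  unfolding is_path_iff_successively by (auto simp: successively_take dest: in_set_takeD)

lemma is_path_drop: "is_path V E ps \<Longrightarrow> k < length ps \<Longrightarrow> is_path V E (drop k ps)"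
  unfolding is_path_iff_successively by (auto simp: successively_drop dest: in_set_dropD)

lemma is_path_butlast:
  assumes "is_path V E p" "2 \<le> length p"
  shows "is_path V E (butlast p)" "butlast p \<noteq> []" "hd (butlast p) = hd p"
    "{last (butlast p), last p} \<in> E" "p = butlast p @ [last p]"
proof -
  have "p \<noteq> []" using assms(2) by auto
  then show eq: "p = butlast p @ [last p]" by simp
  show ne: "butlast p \<noteq> []" using assms by (cases p) auto
  show "is_path V E (butlast p)"
    using is_path_take[OF assms(1), of "length p - 1"] assms by (simp add: butlast_conv_take)
  show "hd (butlast p) = hd p" using ne by (metis eq hd_append)
  have "successively (\<lambda>x y. {x, y} \<in> E) (butlast p @ [last p])"
    using assms(1) eq by (simp add: is_path_iff_successively)
  then show "{last (butlast p), last p} \<in> E" using ne by (simp add: successively_append_iff)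
qed

text \<open>The cycle runs along p from the last vertex of q that lies on p, through b, and back
  along q.\<close>
lemma cycle_of_paths_to_common_neighbour:
  assumes p: "is_path V E p" and q: "is_path V E q" and h: "hd p = hd q"
    and b: "b \<notin> set p" "b \<notin> set q" "b \<in> V"
    and e1: "{last p, b} \<in> E" and e2: "{last q, b} \<in> E" and ne: "last p \<noteq> last q"
  shows "\<exists>c. is_cycle V E c"
proof -
  define J where "J = {j. j < length q \<and> q ! j \<in> set p}"
  have pne: "p \<noteq> []" and qne: "q \<noteq> []" using p q by (auto simp: is_path_def)
  have "q ! 0 \<in> set p" using pne qne h by (metis hd_conv_nth hd_in_set)
  then have "0 \<in> J" using qne by (auto simp: J_def)
  define j where "j = Max J"
  have finJ: "finite J" by (auto simp: J_def)
  have jJ: "j \<in> J" using finJ \<open>0 \<in> J\<close> unfolding j_def using Max_in by blast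
  have jmax: "\<And>k. k < length q \<Longrightarrow> j < k \<Longrightarrow> q ! k \<notin> set p"
    using finJ j_def J_def by (metis (mono_tags, lifting) Max_ge leD mem_Collect_eq)
  from jJ obtain i where i: "i < length p" "p ! i = q ! j" and jl: "j < length q"
    by (auto simp: J_def in_set_conv_nth)
  define c where "c = drop i p @ [b] @ rev (drop (Suc j) q)"
  have dp: "distinct p" "distinct q" "set p \<subseteq> V" "set q \<subseteq> V"
    using p q by (auto simp: is_path_def)
  have sp: "successively (\<lambda>x y. {x, y} \<in> E) p" "successively (\<lambda>x y. {x, y} \<in> E) q"
    using p q by (auto simp: is_path_iff_successively)
  have disj: "set (drop (Suc j) q) \<inter> set p = {}"
  proof -
    { fix x assume "x \<in> set (drop (Suc j) q)" "x \<in> set p"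
      then obtain k where "k < length (drop (Suc j) q)" "drop (Suc j) q ! k = x"
        by (auto simp: in_set_conv_nth)
      then have "Suc j + k < length q" "q ! (Suc j + k) = x" by auto
      with jmax \<open>x \<in> set p\<close> have False by force }
    then show ?thesis by blast
  qed
  have "distinct c" using dp b disj by (auto simp: c_def dest: in_set_dropD)
  moreover have "set c \<subseteq> V" using dp b by (auto simp: c_def dest: in_set_dropD)
  moreover have "successively (\<lambda>x y. {x, y} \<in> E) c"
  proof -
    have s3: "successively (\<lambda>x y. {x, y} \<in> E) (rev (drop (Suc j) q))"
      using successively_drop[OF sp(2), of "Suc j"] by (simp add: insert_commute)
    have "successively (\<lambda>x y. {x, y} \<in> E) ([b] @ rev (drop (Suc j) q))"
    proof (cases "Suc j < length q")
      case True
      then have "hd (rev (drop (Suc j) q)) = last q" by (simp add: hd_rev)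
      then show ?thesis using s3 e2 True
        by (subst successively_append_iff) (auto simp: insert_commute)
    qed simp
    then show ?thesis using successively_drop[OF sp(1)] i e1 unfolding c_def
      by (subst successively_append_iff) auto
  qed
  moreover have "3 \<le> length c \<and> {last c, hd c} \<in> E"
  proof (cases "Suc j < length q")
    case True
    then have "last c = q ! Suc j" "hd c = q ! j"
      using i by (simp_all add: c_def last_rev hd_drop_conv_nth)
    then show ?thesis using i True successively_nth[OF sp(2) True]
      by (simp add: c_def insert_commute)
  next
    case False
    then have "j = length q - 1" using jl by auto
    then have "q ! j = last q" using qne by (simp add: last_conv_nth)
    moreover have "last c = b" "hd c = q ! j"
      using False i by (simp_all add: c_def hd_drop_conv_nth)
    moreover have "i \<noteq> length p - 1" using i ne pne \<open>q ! j = last q\<close> by (auto simp: last_conv_nth)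
    ultimately show ?thesis using i e2 by (simp add: c_def insert_commute)
  qed
  ultimately have "is_cycle V E c" unfolding is_cycle_def is_path_iff_successively
    by (auto simp: c_def)
  then show ?thesis by blast
qed

lemma acyclic_path_unique:
  assumes acyc: "\<not> (\<exists>c. is_cycle V E c)"
  shows "is_path V E p \<Longrightarrow> is_path V E q \<Longrightarrow> hd p = hd q \<Longrightarrow> last p = last q \<Longrightarrow> p = q"
proof (induction "length p + length q" arbitrary: p q rule: less_induct)
  case less
  have singleton: "length xs = 1" if "is_path V E xs" "is_path V E ys" "length ys = 1"
    "hd xs = hd ys" "last xs = last ys" for xs ys
    using that by (cases ys; cases xs) (auto simp: is_path_def split: if_splits)
  show ?case
  proof (cases "length p = 1 \<or> length q = 1")
    case True
    then have "length p = 1" "length q = 1"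
      using singleton[of p q] singleton[of q p] less.prems by auto
    then show ?thesis using less.prems by (cases p; cases q) auto
  next
    case False
    moreover have "p \<noteq> []" "q \<noteq> []" using less.prems by (auto simp: is_path_def)
    ultimately have lp: "2 \<le> length p" and lq: "2 \<le> length q"
      by (metis One_nat_def Suc_1 Suc_leI le_neq_implies_less length_greater_0_conv not_less_eq_eq)+
    note P = is_path_butlast[OF less.prems(1) lp] and Q = is_path_butlast[OF less.prems(2) lq]
    show ?thesis
    proof (cases "last (butlast p) = last (butlast q)")
      case True
      have "butlast p = butlast q"
        by (rule less.hyps) (use lp lq P Q True less.prems in auto)
      then show ?thesis using P(5) Q(5) less.prems(4) by metis
    next
      case False
      have "last p \<notin> set (butlast p)" "last q \<notin> set (butlast q)"
        using less.prems(1,2) P(5) Q(5) unfolding is_path_def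
        by (metis distinct_append disjoint_iff list.set_intros(1))+
      moreover have "last p \<in> V" using less.prems(1) unfolding is_path_def by auto
      ultimately have "\<exists>c. is_cycle V E c"
        using cycle_of_paths_to_common_neighbour[OF P(1) Q(1), of "last p"] P Q False less.prems
        by auto
      then show ?thesis using acyc by blast
    qed
  qed
qed

section \<open>Rooted trees\<close>

locale rooted_tree =
  fixes S :: "'a set" and E :: "'a set set" and r :: 'a
  assumes finite_vertices: "finite S" and root_vertex: "r \<in> S"
    and edges: "\<forall>e\<in>E. \<exists>a b. a \<noteq> b \<and> a \<in> S \<and> b \<in> S \<and> e = {a, b}"
    and acyclic: "\<not> (\<exists>c. is_cycle S E c)"
    and reachable: "\<forall>a\<in>S. \<exists>ps. is_path S E ps \<and> hd ps = r \<and> last ps = a"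
begin

definition path_to :: "'a \<Rightarrow> 'a list" where
  "path_to a = (THE ps. is_path S E ps \<and> hd ps = r \<and> last ps = a)"

lemma path_to:
  assumes "a \<in> S"
  shows "is_path S E (path_to a)" "hd (path_to a) = r" "last (path_to a) = a"
proof -
  obtain ps where ps: "is_path S E ps \<and> hd ps = r \<and> last ps = a" using reachable assms by blast
  have "is_path S E (path_to a) \<and> hd (path_to a) = r \<and> last (path_to a) = a"
    unfolding path_to_def
  proof (rule theI[of _ ps])
    fix qs assume "is_path S E qs \<and> hd qs = r \<and> last qs = a"
    then show "qs = ps" using acyclic_path_unique[OF acyclic, of qs ps] ps by simp
  qed (rule ps)
  then show "is_path S E (path_to a)" "hd (path_to a) = r" "last (path_to a) = a" by auto
qed

lemma path_to_eqI:
  assumes "is_path S E ps" "hd ps = r"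
  shows "path_to (last ps) = ps"
proof -
  have "last ps \<in> S" using assms unfolding is_path_def by auto
  then show ?thesis
    using path_to[of "last ps"] assms acyclic_path_unique[OF acyclic, of "path_to (last ps)" ps]
    by simp
qed

lemma path_to_not_Nil: "a \<in> S \<Longrightarrow> path_to a \<noteq> []"
  using path_to(1)[of a] unfolding is_path_def by blast

lemma set_path_to_subset: "a \<in> S \<Longrightarrow> set (path_to a) \<subseteq> S"
  using path_to(1)[of a] unfolding is_path_def by blast

lemma distinct_path_to: "a \<in> S \<Longrightarrow> distinct (path_to a)"
  using path_to(1)[of a] unfolding is_path_def by blast

lemma path_to_nth:
  assumes "a \<in> S" "k < length (path_to a)"
  shows "path_to (path_to a ! k) = take (Suc k) (path_to a)"
proof -
  have "is_path S E (take (Suc k) (path_to a))"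
    using is_path_take[OF path_to(1)[OF assms(1)]] by simp
  moreover have "hd (take (Suc k) (path_to a)) = r"
    using path_to(2)[OF assms(1)] path_to_not_Nil[OF assms(1)] by simp
  moreover have "last (take (Suc k) (path_to a)) = path_to a ! k"
    using assms(2) by (simp add: take_Suc_conv_app_nth)
  ultimately show ?thesis using path_to_eqI[of "take (Suc k) (path_to a)"] by simp
qed

lemma path_to_of_member:
  assumes "a \<in> S" "b \<in> set (path_to a)"
  obtains k where "k < length (path_to a)" "b = path_to a ! k"
    "path_to b = take (Suc k) (path_to a)"
  using assms path_to_nth by (metis in_set_conv_nth)

lemma path_to_root: "path_to r = [r]"
  using path_to_eqI[of "[r]"] root_vertex by (simp add: is_path_def)

definition parent :: "'a \<Rightarrow> 'a" where
  "parent a = path_to a ! (length (path_to a) - 2)"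

lemma path_to_parent:
  assumes "a \<in> S" "a \<noteq> r"
  shows "path_to a = path_to (parent a) @ [a]" "parent a \<in> S"
proof -
  have "length (path_to a) \<noteq> 1"
    using path_to[OF assms(1)] assms(2) by (auto simp: length_Suc_conv)
  then have l: "2 \<le> length (path_to a)" using path_to_not_Nil[OF assms(1)]
    by (metis One_nat_def Suc_1 Suc_leI le_neq_implies_less length_greater_0_conv not_less_eq_eq)
  then have "Suc (length (path_to a) - 2) = length (path_to a) - 1" by arith
  then have "path_to (parent a) = butlast (path_to a)"
    unfolding parent_def using l path_to_nth[OF assms(1), of "length (path_to a) - 2"]
    by (simp add: butlast_conv_take)
  then show "path_to a = path_to (parent a) @ [a]"
    using append_butlast_last_id[OF path_to_not_Nil[OF assms(1)]] path_to(3)[OF assms(1)] by simp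
  show "parent a \<in> S"
    unfolding parent_def using set_path_to_subset[OF assms(1)] l by (auto intro: nth_mem)
qed

lemma length_path_to_parent:
  "a \<in> S \<Longrightarrow> a \<noteq> r \<Longrightarrow> length (path_to a) = Suc (length (path_to (parent a)))"
  using path_to_parent(1) by (metis length_append_singleton)

lemma parent_edge:
  assumes "a \<in> S" "a \<noteq> r"
  shows "{parent a, a} \<in> E"
proof -
  note p = path_to_parent[OF assms]
  have "successively (\<lambda>x y. {x, y} \<in> E) (path_to (parent a) @ [a])"
    using p(1) path_to(1)[OF assms(1)] by (simp add: is_path_iff_successively)
  then show ?thesis using path_to(3)[OF p(2)] path_to_not_Nil[OF p(2)]
    by (simp add: successively_append_iff)
qed

lemma parent_path_to_nth:
  assumes "a \<in> S" "k < length (path_to a)" "0 < k"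
  shows "path_to a ! k \<noteq> r" "parent (path_to a ! k) = path_to a ! (k - 1)"
proof -
  have "path_to a ! 0 = r" using path_to(2)[OF assms(1)] path_to_not_Nil[OF assms(1)]
    by (simp add: hd_conv_nth)
  moreover have "path_to a ! k = path_to a ! 0 \<longleftrightarrow> k = 0"
    by (rule nth_eq_iff_index_eq[OF distinct_path_to[OF assms(1)]]) (use assms in auto)
  ultimately show "path_to a ! k \<noteq> r" using assms(3) by auto
  show "parent (path_to a ! k) = path_to a ! (k - 1)"
    unfolding parent_def using assms path_to_nth[OF assms(1,2)] by simp
qed

lemma edge_endpoints: "{a, b} \<in> E \<Longrightarrow> a \<in> S \<and> b \<in> S \<and> a \<noteq> b"
  using edges by (metis doubleton_eq_iff)

text \<open>An edge not joining a vertex to its parent would close a cycle with a root path.\<close>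
lemma edge_parent_cases:
  assumes "{a, b} \<in> E"
  shows "(a \<noteq> r \<and> b = parent a) \<or> (b \<noteq> r \<and> a = parent b)"
proof -
  have ab: "a \<in> S" "b \<in> S" "a \<noteq> b" using edge_endpoints[OF assms] by auto
  note pb = path_to[OF ab(2)] path_to_not_Nil[OF ab(2)]
  show ?thesis
  proof (cases "a \<in> set (path_to b)")
    case True
    then obtain k where k: "k < length (path_to b)" "path_to b ! k = a"
      by (auto simp: in_set_conv_nth)
    have "k \<noteq> length (path_to b) - 1" using k(2) pb ab(3) by (auto simp: last_conv_nth)
    show ?thesis
    proof (cases "k = length (path_to b) - 2")
      case True
      then have "b \<noteq> r" using k \<open>k \<noteq> length (path_to b) - 1\<close> path_to_root by auto
      then show ?thesis using True k(2) unfolding parent_def by simp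
    next
      case False
      then have "k + 3 \<le> length (path_to b)" using k(1) \<open>k \<noteq> length (path_to b) - 1\<close> by linarith
      then have "is_cycle S E (drop k (path_to b))"
        unfolding is_cycle_def using is_path_drop[OF pb(1) k(1)] k pb(3) assms
        by (auto simp: hd_drop_conv_nth insert_commute)
      then show ?thesis using acyclic by blast
    qed
  next
    case False
    have "is_path S E (path_to b @ [a])"
      using pb False ab(1) assms
      by (auto simp: is_path_iff_successively successively_append_iff insert_commute)
    then have pa: "path_to a = path_to b @ [a]" using path_to_eqI[of "path_to b @ [a]"] pb by simp
    then have "a \<noteq> r" using path_to_root pb(4) by (cases "path_to b") auto
    moreover have "parent a = b" unfolding parent_def pa using pb
      by (simp add: nth_append last_conv_nth)
    ultimately show ?thesis by simp
  qed
qed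

lemma desc_eq: "desc S E r u = {a \<in> S. u \<in> set (path_to a)}"
proof -
  have "a \<in> S \<and> u \<in> set (path_to a)"
    if "is_path S E ps" "hd ps = r" "last ps = a" "u \<in> set ps" for a ps
    using that path_to_eqI[OF that(1,2)] unfolding is_path_def by auto
  then show ?thesis unfolding desc_def using path_to by blast
qed

lemma desc_subset_vertices: "desc S E r u \<subseteq> S"
  by (auto simp: desc_eq)

lemma finite_desc: "finite (desc S E r u)"
  using finite_vertices desc_subset_vertices finite_subset by blast

lemma self_in_desc: "a \<in> S \<Longrightarrow> a \<in> desc S E r a"
  using last_in_set[OF path_to_not_Nil] path_to(3) by (simp add: desc_eq)

lemma root_in_desc: "r \<in> desc S E r u \<Longrightarrow> u = r"
  by (auto simp: desc_eq path_to_root)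

lemma in_desc_parent:
  assumes "a \<in> S" "a \<noteq> r"
  shows "a \<in> desc S E r (parent a)"
proof -
  have "parent a \<in> set (path_to (parent a))"
    using last_in_set[OF path_to_not_Nil] path_to(3) path_to_parent(2)[OF assms] by metis
  then show ?thesis using assms path_to_parent(1)[OF assms] by (simp add: desc_eq)
qed

lemma length_path_to_desc:
  assumes "a \<in> desc S E r b"
  shows "length (path_to b) \<le> length (path_to a)"
    "length (path_to b) = length (path_to a) \<longleftrightarrow> a = b"
proof -
  have a: "a \<in> S" "b \<in> set (path_to a)" using assms by (auto simp: desc_eq)
  then obtain k where k: "k < length (path_to a)" "b = path_to a ! k"
    "path_to b = take (Suc k) (path_to a)"
    by (rule path_to_of_member)
  show "length (path_to b) \<le> length (path_to a)" using k by simp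
  have "b \<in> S" using a set_path_to_subset by blast
  have "a = b" if "length (path_to b) = length (path_to a)"
  proof -
    have "path_to b = path_to a" using that k by simp
    then show ?thesis using path_to(3) a(1) \<open>b \<in> S\<close> by metis
  qed
  then show "length (path_to b) = length (path_to a) \<longleftrightarrow> a = b" by auto
qed

lemma desc_subset_desc:
  assumes "a \<in> desc S E r b"
  shows "desc S E r a \<subseteq> desc S E r b"
proof
  fix c assume "c \<in> desc S E r a"
  then have c: "c \<in> S" "a \<in> set (path_to c)" by (auto simp: desc_eq)
  then obtain k where "path_to a = take (Suc k) (path_to c)" by (rule path_to_of_member)
  then have "set (path_to a) \<subseteq> set (path_to c)" by (metis set_take_subset)
  then show "c \<in> desc S E r b" using assms c by (auto simp: desc_eq)
qed

lemma parent_in_desc: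
  assumes "y \<in> desc S E r u" "y \<noteq> u"
  shows "y \<noteq> r" "parent y \<in> desc S E r u"
proof -
  have yS: "y \<in> S" "u \<in> set (path_to y)" using assms by (auto simp: desc_eq)
  show yr: "y \<noteq> r" using assms yS by (auto simp: path_to_root)
  have "u \<in> set (path_to (parent y))" using path_to_parent(1)[OF yS(1) yr] yS(2) assms(2) by auto
  then show "parent y \<in> desc S E r u" using path_to_parent(2)[OF yS(1) yr] by (simp add: desc_eq)
qed

lemma children_eq: "children S E r u = {w \<in> S. w \<noteq> r \<and> parent w = u}"
proof (intro set_eqI iffI)
  fix w assume w: "w \<in> children S E r u"
  then have e: "{u, w} \<in> E" and wd: "w \<in> desc S E r u" unfolding children_def by auto
  have S: "u \<in> S" "w \<in> S" using edge_endpoints[OF e] by auto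
  have "\<not> (u \<noteq> r \<and> w = parent u)"
    using length_path_to_parent[OF S(1)] length_path_to_desc(1)[OF wd] by auto
  then show "w \<in> {w \<in> S. w \<noteq> r \<and> parent w = u}" using edge_parent_cases[OF e] S by auto
next
  fix w assume "w \<in> {w \<in> S. w \<noteq> r \<and> parent w = u}"
  then have w: "w \<in> S" "w \<noteq> r" "parent w = u" by auto
  then show "w \<in> children S E r u"
    using parent_edge[OF w(1,2)] in_desc_parent[OF w(1,2)] length_path_to_parent[OF w(1,2)]
    unfolding children_def by auto
qed

lemma finite_children: "finite (children S E r u)"
  using finite_vertices by (simp add: children_eq)

lemma child_in_desc: "w \<in> children S E r u \<Longrightarrow> w \<in> desc S E r u"
  unfolding children_def by blast

lemma length_path_to_child:
  "w \<in> children S E r u \<Longrightarrow> length (path_to w) = Suc (length (path_to u))"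
  using length_path_to_parent by (auto simp: children_eq)

lemma neighbours_eq:
  assumes "a \<in> S"
  shows "{w. {a, w} \<in> E} = (if a = r then {} else {parent a}) \<union> children S E r a"
proof (intro set_eqI iffI)
  fix w assume "w \<in> {w. {a, w} \<in> E}"
  then have e: "{a, w} \<in> E" by simp
  then have "w \<in> S" using edge_endpoints by blast
  with edge_parent_cases[OF e] show "w \<in> (if a = r then {} else {parent a}) \<union> children S E r a"
    by (auto simp: children_eq)
next
  fix w assume "w \<in> (if a = r then {} else {parent a}) \<union> children S E r a"
  then show "w \<in> {w. {a, w} \<in> E}"
  proof (cases "w \<in> children S E r a")
    case True
    then show ?thesis using parent_edge[of w] by (auto simp: children_eq insert_commute)
  next
    case False
    with \<open>w \<in> _\<close> have "a \<noteq> r" "w = parent a" by (auto split: if_splits)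
    then show ?thesis using parent_edge[OF assms] by (simp add: insert_commute)
  qed
qed

lemma deg_eq:
  assumes "a \<in> S" "a \<noteq> r"
  shows "deg E a = Suc (card (children S E r a))"
proof -
  have "parent a \<notin> children S E r a"
  proof
    assume "parent a \<in> children S E r a"
    then have "parent a \<in> S" "parent a \<noteq> r" "parent (parent a) = a" by (auto simp: children_eq)
    then show False using length_path_to_parent[OF assms] length_path_to_parent by fastforce
  qed
  then show ?thesis
    unfolding deg_def neighbours_eq[OF assms(1)] using assms finite_children by simp
qed

lemma dist_eq:
  assumes "a \<in> S"
  shows "dist S E r a = length (path_to a) - 1"
  unfolding dist_def
proof (rule Least_equality)
  show "\<exists>ps. is_path S E ps \<and> hd ps = r \<and> last ps = a \<and> length ps = Suc (length (path_to a) - 1)"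
    using path_to[OF assms] path_to_not_Nil[OF assms] by (intro exI[of _ "path_to a"]) auto
next
  fix n assume "\<exists>ps. is_path S E ps \<and> hd ps = r \<and> last ps = a \<and> length ps = Suc n"
  then obtain ps where "is_path S E ps" "hd ps = r" "last ps = a" "length ps = Suc n" by blast
  then show "length (path_to a) - 1 \<le> n" using path_to_eqI by force
qed

lemma desc_eq_insert_children:
  assumes "u \<in> S"
  shows "desc S E r u = insert u (\<Union>w\<in>children S E r u. desc S E r w)"
proof (intro set_eqI iffI)
  fix a assume a: "a \<in> desc S E r u"
  show "a \<in> insert u (\<Union>w\<in>children S E r u. desc S E r w)"
  proof (cases "a = u")
    case False
    have aS: "a \<in> S" "u \<in> set (path_to a)" using a by (auto simp: desc_eq)
    then obtain k where k: "k < length (path_to a)" "u = path_to a ! k"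
      "path_to u = take (Suc k) (path_to a)"
      by (rule path_to_of_member)
    have "length (path_to u) < length (path_to a)" using length_path_to_desc[OF a] False by simp
    then have k1: "Suc k < length (path_to a)" using k by simp
    define w where "w = path_to a ! Suc k"
    have "w \<in> children S E r u"
      using set_path_to_subset[OF aS(1)] k1 parent_path_to_nth[OF aS(1) k1] k(2)
      unfolding w_def by (auto simp: children_eq intro: nth_mem)
    moreover have "a \<in> desc S E r w"
      using aS k1 unfolding w_def by (auto simp: desc_eq intro: nth_mem)
    ultimately show ?thesis by blast
  qed simp
next
  fix a assume "a \<in> insert u (\<Union>w\<in>children S E r u. desc S E r w)"
  then show "a \<in> desc S E r u"
    using self_in_desc[OF assms] desc_subset_desc[OF child_in_desc] by blast
qed

lemma desc_children_disjoint:
  assumes "w1 \<in> children S E r u" "w2 \<in> children S E r u"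
    "a \<in> desc S E r w1" "a \<in> desc S E r w2"
  shows "w1 = w2"
proof -
  have aS: "a \<in> S" "w1 \<in> set (path_to a)" "w2 \<in> set (path_to a)" using assms by (auto simp: desc_eq)
  obtain k1 where k1: "k1 < length (path_to a)" "w1 = path_to a ! k1"
    "path_to w1 = take (Suc k1) (path_to a)"
    using path_to_of_member[OF aS(1,2)] by blast
  obtain k2 where k2: "k2 < length (path_to a)" "w2 = path_to a ! k2"
    "path_to w2 = take (Suc k2) (path_to a)"
    using path_to_of_member[OF aS(1,3)] by blast
  have "length (path_to w1) = length (path_to w2)" using length_path_to_child assms(1,2) by simp
  then show ?thesis using k1 k2 by simp
qed

lemma edge_into_desc_closed:
  assumes "x \<in> S" "x \<notin> X" "y \<in> X" "{x, y} \<in> E" "\<forall>a\<in>X. desc S E r a \<subseteq> X"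
  shows "y \<noteq> r \<and> x = parent y"
  using edge_parent_cases[OF assms(4)]
proof
  assume "x \<noteq> r \<and> y = parent x"
  then have "x \<in> desc S E r y" using in_desc_parent[OF assms(1)] by simp
  then show ?thesis using assms by blast
qed simp

lemma rooted_tree_Diff:
  assumes X: "r \<notin> X" "\<forall>a\<in>X. desc S E r a \<subseteq> X"
  shows "rooted_tree (S - X) (ind E (S - X)) r"
proof
  show "finite (S - X)" using finite_vertices by simp
  show "r \<in> S - X" using root_vertex X by simp
  show "\<forall>e\<in>ind E (S - X). \<exists>a b. a \<noteq> b \<and> a \<in> S - X \<and> b \<in> S - X \<and> e = {a, b}"
  proof
    fix e assume "e \<in> ind E (S - X)"
    then have e: "e \<in> E" "e \<subseteq> S - X" by (auto simp: ind_def)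
    then obtain a b where "a \<noteq> b" "e = {a, b}" using edges by blast
    then show "\<exists>a b. a \<noteq> b \<and> a \<in> S - X \<and> b \<in> S - X \<and> e = {a, b}" using e by blast
  qed
  show "\<not> (\<exists>c. is_cycle (S - X) (ind E (S - X)) c)"
  proof
    assume "\<exists>c. is_cycle (S - X) (ind E (S - X)) c"
    then obtain c where "is_cycle (S - X) (ind E (S - X)) c" by blast
    then have "is_cycle S E c" unfolding is_cycle_def is_path_def ind_def by auto
    then show False using acyclic by blast
  qed
  show "\<forall>a\<in>S - X. \<exists>ps. is_path (S - X) (ind E (S - X)) ps \<and> hd ps = r \<and> last ps = a"
  proof
    fix a assume a: "a \<in> S - X"
    have "a \<in> desc S E r y" if "y \<in> set (path_to a)" for y
      using a that by (simp add: desc_eq)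
    then have sub: "set (path_to a) \<subseteq> S - X"
      using set_path_to_subset[of a] a X(2) by auto
    have "successively (\<lambda>x y. {x, y} \<in> E) (path_to a)"
      using path_to(1)[of a] a by (simp add: is_path_iff_successively)
    then have "successively (\<lambda>x y. {x, y} \<in> ind E (S - X)) (path_to a)"
      by (rule successively_mono) (use sub in \<open>auto simp: ind_def\<close>)
    then have "is_path (S - X) (ind E (S - X)) (path_to a)"
      using path_to(1)[of a] a sub by (simp add: is_path_iff_successively)
    then show "\<exists>ps. is_path (S - X) (ind E (S - X)) ps \<and> hd ps = r \<and> last ps = a"
      using path_to(2,3)[of a] a by blast
  qed
qed

end

section \<open>Dissociation sets\<close>

lemma dissociation_set_subset:
  assumes "dissociation_set V E F" "F' \<subseteq> F" "finite V"
  shows "dissociation_set V E F'"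
  unfolding dissociation_set_def
proof (intro conjI ballI)
  show "F' \<subseteq> V" using assms unfolding dissociation_set_def by blast
  fix x assume "x \<in> F'"
  have "finite F" using assms finite_subset unfolding dissociation_set_def by blast
  then have "card {y \<in> F'. {x, y} \<in> E} \<le> card {y \<in> F. {x, y} \<in> E}"
    using assms(2) by (intro card_mono) auto
  also have "\<dots> \<le> 1" using assms \<open>x \<in> F'\<close> unfolding dissociation_set_def by blast
  finally show "card {y \<in> F'. {x, y} \<in> E} \<le> 1" .
qed

lemma dissociation_set_ind_iff:
  assumes "F \<subseteq> U" "U \<subseteq> V"
  shows "dissociation_set U (ind E U) F \<longleftrightarrow> dissociation_set V E F"
proof -
  have "{y \<in> F. {x, y} \<in> ind E U} = {y \<in> F. {x, y} \<in> E}" if "x \<in> F" for x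
    using assms that by (auto simp: ind_def)
  then show ?thesis using assms unfolding dissociation_set_def by auto
qed

lemma dissociation_set_Un:
  assumes "dissociation_set V E F1" "dissociation_set V E F2"
    and no_edge: "\<And>x y. x \<in> F1 \<Longrightarrow> y \<in> F2 \<Longrightarrow> {x, y} \<notin> E"
  shows "dissociation_set V E (F1 \<union> F2)"
proof -
  have "{y \<in> F1 \<union> F2. {x, y} \<in> E} = {y \<in> F1. {x, y} \<in> E}" if "x \<in> F1" for x
    using that no_edge by auto
  moreover have "{y \<in> F1 \<union> F2. {x, y} \<in> E} = {y \<in> F2. {x, y} \<in> E}" if "x \<in> F2" for x
    using that no_edge by (auto simp: insert_commute)
  ultimately show ?thesis using assms unfolding dissociation_set_def by auto
qed

definition is_P3 :: "'a set set \<Rightarrow> 'a set \<Rightarrow> bool" where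
  "is_P3 E T \<longleftrightarrow> (\<exists>a b c. T = {a, b, c} \<and> a \<noteq> c \<and> {a, b} \<in> E \<and> {b, c} \<in> E)"

lemma P3_not_subset_dissociation_set:
  assumes "dissociation_set V E F" "finite V" "is_P3 E T"
  shows "\<not> T \<subseteq> F"
proof
  assume TF: "T \<subseteq> F"
  obtain a b c where abc: "T = {a, b, c}" "a \<noteq> c" "{a, b} \<in> E" "{b, c} \<in> E"
    using assms(3) unfolding is_P3_def by blast
  have "finite F" using assms finite_subset unfolding dissociation_set_def by blast
  then have "card {a, c} \<le> card {y \<in> F. {b, y} \<in> E}"
    using TF abc by (intro card_mono) (auto simp: insert_commute)
  moreover have "card {y \<in> F. {b, y} \<in> E} \<le> 1"
    using assms(1) TF abc unfolding dissociation_set_def by blast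
  ultimately show False using abc(2) by simp
qed

text \<open>Each of the disjoint P3s inside X misses a vertex of F.\<close>
lemma card_Int_dissociation_set_le:
  assumes F: "dissociation_set V E F" "finite V" and X: "FX \<subseteq> X" "X \<subseteq> V"
    and "finite I" and card_I: "card (X - FX) \<le> card I"
    and P3: "\<And>k. k \<in> I \<Longrightarrow> is_P3 E (T k)" and sub: "\<And>k. k \<in> I \<Longrightarrow> T k \<subseteq> X"
    and disj: "\<And>k k'. k \<in> I \<Longrightarrow> k' \<in> I \<Longrightarrow> k \<noteq> k' \<Longrightarrow> T k \<inter> T k' = {}"
  shows "card (F \<inter> X) \<le> card FX"
proof -
  have "finite X" using X F(2) finite_subset by blast
  have "\<exists>x. x \<in> T k - F" if "k \<in> I" for k
    using P3_not_subset_dissociation_set[OF F P3[OF that]] by blast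
  then obtain g where g: "\<And>k. k \<in> I \<Longrightarrow> g k \<in> T k - F" by metis
  have "inj_on g I"
  proof (rule inj_onI)
    fix k k' assume k: "k \<in> I" "k' \<in> I" "g k = g k'"
    show "k = k'"
    proof (rule ccontr)
      assume "k \<noteq> k'"
      then have "T k \<inter> T k' = {}" using disj k by blast
      moreover have "g k \<in> T k" "g k \<in> T k'" using g[OF k(1)] g[OF k(2)] k(3) by auto
      ultimately show False by blast
    qed
  qed
  moreover have "g ` I \<subseteq> X - F" using g sub by auto
  ultimately have "card I \<le> card (X - F)"
    using \<open>finite X\<close> by (intro card_inj_on_le) auto
  with card_I have "card (X - FX) \<le> card (X - F)" by simp
  moreover have "card (X - FX) = card X - card FX" "card FX \<le> card X"
    using \<open>finite X\<close> X(1) by (simp_all add: card_Diff_subset finite_subset card_mono)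
  moreover have "card (X - F) = card X - card (F \<inter> X)" "card (F \<inter> X) \<le> card X"
    using \<open>finite X\<close> by (simp_all add: card_Diff_subset_Int Int_commute card_mono)
  ultimately show ?thesis by linarith
qed

definition max_diss_root_values :: "'a set \<Rightarrow> 'a set set \<Rightarrow> 'a \<Rightarrow> bool set" where
  "max_diss_root_values V E r = {r \<in> F | F. max_dissociation_set V E F}"

lemma max_diss_root_values_eq_iff:
  "max_diss_root_values V' E' r = max_diss_root_values V E r \<longleftrightarrow>
     (\<forall>F'. max_dissociation_set V' E' F' \<longrightarrow>
        (\<exists>F. max_dissociation_set V E F \<and> (r \<in> F \<longleftrightarrow> r \<in> F'))) \<and>
     (\<forall>F. max_dissociation_set V E F \<longrightarrow>
        (\<exists>F'. max_dissociation_set V' E' F' \<and> (r \<in> F' \<longleftrightarrow> r \<in> F)))"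
  (is "?eq \<longleftrightarrow> ?fwd \<and> ?bwd")
proof
  assume ?eq
  then have "b \<in> max_diss_root_values V E r \<longleftrightarrow> b \<in> max_diss_root_values V' E' r" for b
    by simp
  then show "?fwd \<and> ?bwd" unfolding max_diss_root_values_def by blast
next
  assume "?fwd \<and> ?bwd"
  then show ?eq unfolding max_diss_root_values_def by blast
qed

lemma max_diss_root_values_Diff:
  assumes "finite V" and X: "X \<subseteq> V" "r \<notin> X" "FX \<subseteq> X"
    and bound: "\<And>F. dissociation_set V E F \<Longrightarrow> card (F \<inter> X) \<le> card FX"
    and extend: "\<And>F'. dissociation_set (V - X) (ind E (V - X)) F' \<Longrightarrow>
      dissociation_set V E (F' \<union> FX)"
  shows "max_diss_root_values (V - X) (ind E (V - X)) r = max_diss_root_values V E r"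
proof -
  have card_split: "card G = card (G - X) + card (G \<inter> X)" if "G \<subseteq> V" for G
  proof -
    have "finite G" using finite_subset[OF that \<open>finite V\<close>] .
    then show ?thesis using card_Int_Diff[of G X] by simp
  qed
  have card_extend: "card (F' \<union> FX) = card F' + card FX" if "F' \<subseteq> V - X" for F'
  proof -
    have "finite F'" "finite FX"
      using finite_subset[OF that] finite_subset[OF order_trans[OF X(3,1)]] \<open>finite V\<close> by auto
    moreover have "F' \<inter> FX = {}" using that X by blast
    ultimately show ?thesis by (rule card_Un_disjoint)
  qed
  have restrict: "dissociation_set (V - X) (ind E (V - X)) (F - X)"
    if "dissociation_set V E F" for F
  proof -
    have "dissociation_set V E (F - X)"
      using dissociation_set_subset[OF that _ \<open>finite V\<close>] by blast
    moreover have "F - X \<subseteq> V - X" using that unfolding dissociation_set_def by blast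
    ultimately show ?thesis using dissociation_set_ind_iff[of "F - X" "V - X" V] by blast
  qed
  have extend_max: "max_dissociation_set V E (F' \<union> FX)"
    if F': "max_dissociation_set (V - X) (ind E (V - X)) F'" for F'
    unfolding max_dissociation_set_def
  proof (intro conjI allI impI)
    have dF': "dissociation_set (V - X) (ind E (V - X)) F'"
      using F' unfolding max_dissociation_set_def by blast
    then show "dissociation_set V E (F' \<union> FX)" by (rule extend)
    fix G assume G: "dissociation_set V E G"
    have "card (G - X) \<le> card F'"
      using F' restrict[OF G] unfolding max_dissociation_set_def by blast
    moreover have "G \<subseteq> V" "F' \<subseteq> V - X" using G dF' unfolding dissociation_set_def by blast+
    ultimately show "card G \<le> card (F' \<union> FX)"
      using bound[OF G] card_split[of G] card_extend[of F'] by linarith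
  qed
  have restrict_max: "max_dissociation_set (V - X) (ind E (V - X)) (F - X)"
    if F: "max_dissociation_set V E F" for F
    unfolding max_dissociation_set_def
  proof (intro conjI allI impI)
    have dF: "dissociation_set V E F" using F unfolding max_dissociation_set_def by blast
    then show "dissociation_set (V - X) (ind E (V - X)) (F - X)" by (rule restrict)
    fix G assume G: "dissociation_set (V - X) (ind E (V - X)) G"
    have "card (G \<union> FX) \<le> card F" using F extend[OF G] unfolding max_dissociation_set_def by blast
    moreover have "F \<subseteq> V" "G \<subseteq> V - X" using G dF unfolding dissociation_set_def by blast+
    ultimately show "card G \<le> card (F - X)"
      using bound[OF dF] card_split[of F] card_extend[of G] by linarith
  qed
  show ?thesis unfolding max_diss_root_values_eq_iff
  proof (intro conjI allI impI)
    fix F' assume "max_dissociation_set (V - X) (ind E (V - X)) F'"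
    then show "\<exists>F. max_dissociation_set V E F \<and> (r \<in> F \<longleftrightarrow> r \<in> F')"
      using extend_max X(2,3) by (intro exI[of _ "F' \<union> FX"]) auto
  next
    fix F assume "max_dissociation_set V E F"
    then show "\<exists>F'. max_dissociation_set (V - X) (ind E (V - X)) F' \<and> (r \<in> F' \<longleftrightarrow> r \<in> F)"
      using restrict_max X(2) by (intro exI[of _ "F - X"]) auto
  qed
qed

context rooted_tree
begin

lemma dissociation_set_Un_desc_closed:
  assumes X: "X \<subseteq> S" "\<forall>a\<in>X. desc S E r a \<subseteq> X"
    and FX: "dissociation_set S E FX" "FX \<subseteq> X" "\<forall>y\<in>FX. y \<noteq> r \<and> parent y \<in> X"
    and F': "dissociation_set (S - X) (ind E (S - X)) F'"
  shows "dissociation_set S E (F' \<union> FX)"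
proof (rule dissociation_set_Un)
  have "F' \<subseteq> S - X" using F' unfolding dissociation_set_def by blast
  then show "dissociation_set S E F'" using F' dissociation_set_ind_iff[of F' "S - X" S] by blast
  show "dissociation_set S E FX" by (rule FX(1))
  fix x y assume "x \<in> F'" "y \<in> FX"
  then have "x \<in> S" "x \<notin> X" "y \<in> X" using \<open>F' \<subseteq> S - X\<close> FX(2) by auto
  then show "{x, y} \<notin> E" using edge_into_desc_closed[of x X y] X(2) FX(3) \<open>y \<in> FX\<close> by blast
qed

end

section \<open>Hanging paths below a deepest branch vertex\<close>

context rooted_tree
begin

definition is_hanging_path :: "'a \<Rightarrow> 'a list \<Rightarrow> bool" where
  "is_hanging_path w L \<longleftrightarrow> L \<noteq> [] \<and> distinct L \<and> set L = desc S E r w \<and> L ! 0 = w \<and>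
     (\<forall>i. Suc i < length L \<longrightarrow> children S E r (L ! i) = {L ! Suc i}) \<and>
     children S E r (last L) = {}"

lemma hanging_path_exists:
  assumes "w \<in> S" "\<forall>x\<in>desc S E r w. card (children S E r x) \<le> 1"
  shows "\<exists>L. is_hanging_path w L"
  using assms
proof (induction "card (desc S E r w)" arbitrary: w rule: less_induct)
  case less
  have "card (children S E r w) \<le> 1" using less.prems self_in_desc by blast
  then have "\<forall>x\<in>children S E r w. \<forall>y\<in>children S E r w. x = y"
    using card_le_Suc0_iff_eq[OF finite_children] by simp
  then have "children S E r w = {} \<or> (\<exists>c. children S E r w = {c})" by blast
  then show ?case
  proof
    assume "children S E r w = {}"
    then have "is_hanging_path w [w]"
      using desc_eq_insert_children[OF less.prems(1)] unfolding is_hanging_path_def by simp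
    then show ?thesis by blast
  next
    assume "\<exists>c. children S E r w = {c}"
    then obtain c where c: "children S E r w = {c}" by blast
    then have "c \<in> S" by (auto simp: children_eq)
    have dw: "desc S E r w = insert w (desc S E r c)"
      using desc_eq_insert_children[OF less.prems(1)] c by simp
    have "w \<notin> desc S E r c"
    proof
      assume "w \<in> desc S E r c"
      then have "length (path_to c) \<le> length (path_to w)" by (rule length_path_to_desc(1))
      then show False using length_path_to_child[of c w] c by simp
    qed
    then have "card (desc S E r c) < card (desc S E r w)" using dw finite_desc by simp
    moreover have "\<forall>x\<in>desc S E r c. card (children S E r x) \<le> 1" using less.prems(2) dw by blast
    ultimately obtain L where L: "is_hanging_path c L" using less.hyps[OF _ \<open>c \<in> S\<close>] by blast
    have L': "L \<noteq> []" "distinct L" "set L = desc S E r c" "L ! 0 = c"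
      "\<And>i. Suc i < length L \<Longrightarrow> children S E r (L ! i) = {L ! Suc i}"
      "children S E r (last L) = {}"
      using L unfolding is_hanging_path_def by blast+
    have "is_hanging_path w (w # L)"
      unfolding is_hanging_path_def
    proof (intro conjI allI impI)
      show "distinct (w # L)" using L'(2,3) \<open>w \<notin> desc S E r c\<close> by simp
      show "set (w # L) = desc S E r w" using L'(3) dw by simp
      show "children S E r (last (w # L)) = {}" using L'(1,6) by simp
      show "children S E r ((w # L) ! i) = {(w # L) ! Suc i}" if "Suc i < length (w # L)" for i
        using L'(4,5) c that by (cases i) auto
    qed simp_all
    then show ?thesis by blast
  qed
qed

end

lemma mod_3_eq_far_apart:
  assumes "(i::nat) mod 3 = i' mod 3" "i \<noteq> i'"
  shows "i + 3 \<le> i' \<or> i' + 3 \<le> i"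
  using assms by presburger

text \<open>u is the branch vertex of a pruning step; since no branch vertex other than r lies deeper,
  every subtree T_w with w \<in> C is a path hanging from u.\<close>
locale deepest_branch = rooted_tree +
  fixes u :: 'a
  assumes u_vertex: "u \<in> S" and u_not_root: "u \<noteq> r"
    and deepest: "\<forall>x\<in>S. x \<noteq> r \<and> 3 \<le> deg E x \<longrightarrow> dist S E r x \<le> dist S E r u"
begin

abbreviation C :: "'a set" where
  "C \<equiv> children S E r u"

lemma child_of_u:
  assumes "w \<in> C"
  shows "w \<in> S" "w \<noteq> r" "parent w = u"
  using assms by (auto simp: children_eq)

lemma u_notin_desc_child:
  assumes "w \<in> C"
  shows "u \<notin> desc S E r w"
proof
  assume "u \<in> desc S E r w"
  then have "length (path_to w) \<le> length (path_to u)" by (rule length_path_to_desc(1))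
  then show False using length_path_to_child[OF assms] by simp
qed

lemma desc_child_subset: "w \<in> C \<Longrightarrow> desc S E r w \<subseteq> desc S E r u"
  using desc_subset_desc child_in_desc by blast

lemma card_children_below_child:
  assumes w: "w \<in> C" and x: "x \<in> desc S E r w"
  shows "card (children S E r x) \<le> 1"
proof (rule ccontr)
  assume "\<not> card (children S E r x) \<le> 1"
  have xS: "x \<in> S" using x desc_subset_vertices by blast
  have xr: "x \<noteq> r" using root_in_desc[of w] child_of_u(2)[OF w] x by auto
  have "3 \<le> deg E x" using deg_eq[OF xS xr] \<open>\<not> card (children S E r x) \<le> 1\<close> by simp
  then have "dist S E r x \<le> dist S E r u" using deepest xS xr by blast
  then have "length (path_to x) - 1 \<le> length (path_to u) - 1" using dist_eq xS u_vertex by simp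
  moreover have "length (path_to w) \<le> length (path_to x)" using length_path_to_desc(1)[OF x] .
  moreover have "length (path_to w) = Suc (length (path_to u))" using length_path_to_child[OF w] .
  moreover have "length (path_to u) \<noteq> 0" using path_to_not_Nil[OF u_vertex] by simp
  ultimately show False by linarith
qed

definition hpath :: "'a \<Rightarrow> 'a list" where
  "hpath w = (SOME L. is_hanging_path w L)"

lemma hpath:
  assumes "w \<in> C"
  shows "hpath w \<noteq> []" "distinct (hpath w)" "set (hpath w) = desc S E r w" "hpath w ! 0 = w"
    "\<And>i. Suc i < length (hpath w) \<Longrightarrow> children S E r (hpath w ! i) = {hpath w ! Suc i}"
    "children S E r (last (hpath w)) = {}"
proof -
  have "\<exists>L. is_hanging_path w L"
    using hanging_path_exists child_of_u(1)[OF assms] card_children_below_child[OF assms] by blast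
  then have "is_hanging_path w (hpath w)" unfolding hpath_def by (rule someI_ex)
  then show "hpath w \<noteq> []" "distinct (hpath w)" "set (hpath w) = desc S E r w" "hpath w ! 0 = w"
    "\<And>i. Suc i < length (hpath w) \<Longrightarrow> children S E r (hpath w ! i) = {hpath w ! Suc i}"
    "children S E r (last (hpath w)) = {}"
    unfolding is_hanging_path_def by blast+
qed

lemma length_hpath: "w \<in> C \<Longrightarrow> length (hpath w) = card (desc S E r w)"
  using hpath(2,3) distinct_card by metis

lemma hpath_nth:
  assumes "w \<in> C" "i < length (hpath w)"
  shows "hpath w ! i \<in> desc S E r w" "hpath w ! i \<in> S" "hpath w ! i \<noteq> r" "hpath w ! i \<noteq> u"
proof -
  show m: "hpath w ! i \<in> desc S E r w" using hpath(3)[OF assms(1)] assms(2) nth_mem by metis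
  then show "hpath w ! i \<in> S" using desc_subset_vertices by blast
  show "hpath w ! i \<noteq> r" using root_in_desc[of w] child_of_u(2)[OF assms(1)] m by auto
  show "hpath w ! i \<noteq> u" using u_notin_desc_child[OF assms(1)] m by auto
qed

lemma parent_hpath_nth:
  assumes "w \<in> C" "i < length (hpath w)"
  shows "parent (hpath w ! i) = (if i = 0 then u else hpath w ! (i - 1))"
proof (cases i)
  case 0
  then show ?thesis using hpath(4)[OF assms(1)] child_of_u(3)[OF assms(1)] by simp
next
  case (Suc j)
  then have "hpath w ! i \<in> children S E r (hpath w ! j)"
    using hpath(5)[OF assms(1), of j] assms(2) by simp
  then show ?thesis using Suc by (simp add: children_eq)
qed

lemma neighbours_hpath_nth:
  assumes "w \<in> C" "i < length (hpath w)"
  shows "{y. {hpath w ! i, y} \<in> E} =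
    insert (if i = 0 then u else hpath w ! (i - 1))
      (if Suc i < length (hpath w) then {hpath w ! Suc i} else {})"
proof -
  have "children S E r (hpath w ! i) = (if Suc i < length (hpath w) then {hpath w ! Suc i} else {})"
  proof (cases "Suc i < length (hpath w)")
    case False
    then have "i = length (hpath w) - 1" using assms(2) by simp
    then have "hpath w ! i = last (hpath w)"
      using hpath(1)[OF assms(1)] by (simp add: last_conv_nth)
    then show ?thesis using False hpath(6)[OF assms(1)] by simp
  qed (use hpath(5)[OF assms(1)] in simp)
  then show ?thesis
    using neighbours_eq[OF hpath_nth(2)[OF assms]] hpath_nth(3)[OF assms] parent_hpath_nth[OF assms]
    by simp
qed

lemma hpath_nth_eqD:
  assumes "w \<in> C" "w' \<in> C" "i < length (hpath w)" "i' < length (hpath w')"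
    "hpath w ! i = hpath w' ! i'"
  shows "w = w' \<and> i = i'"
proof -
  have "hpath w ! i \<in> desc S E r w" "hpath w ! i \<in> desc S E r w'"
    using hpath_nth(1)[OF assms(1,3)] hpath_nth(1)[OF assms(2,4)] assms(5) by auto
  then have "w = w'" using desc_children_disjoint[OF assms(1,2)] by blast
  moreover have "i = i'"
    using nth_eq_iff_index_eq[OF hpath(2)[OF assms(1)] assms(3)] assms(4,5) \<open>w = w'\<close> by simp
  ultimately show ?thesis by simp
qed

lemma edge_hpath: "w \<in> C \<Longrightarrow> Suc i < length (hpath w) \<Longrightarrow> {hpath w ! i, hpath w ! Suc i} \<in> E"
  using neighbours_hpath_nth[of w "Suc i"] by (auto simp: insert_commute)

lemma edge_u_hpath: "w \<in> C \<Longrightarrow> {u, hpath w ! 0} \<in> E"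
  using parent_edge child_of_u hpath(4) by metis

definition hpath_set :: "'a set \<Rightarrow> (nat \<Rightarrow> bool) \<Rightarrow> 'a set" where
  "hpath_set W P = {hpath w ! i | w i. w \<in> W \<and> i < length (hpath w) \<and> P i}"

lemma hpath_set_iff:
  assumes "W \<subseteq> C" "w \<in> C" "i < length (hpath w)"
  shows "hpath w ! i \<in> hpath_set W P \<longleftrightarrow> w \<in> W \<and> P i"
proof
  assume "hpath w ! i \<in> hpath_set W P"
  then obtain w' i' where w': "w' \<in> W" "i' < length (hpath w')" "P i'" "hpath w ! i = hpath w' ! i'"
    unfolding hpath_set_def by blast
  moreover have "w' \<in> C" using assms(1) w'(1) by blast
  ultimately have "w = w' \<and> i = i'" using hpath_nth_eqD[OF assms(2) _ assms(3)] by simp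
  then show "w \<in> W \<and> P i" using w' by simp
next
  assume "w \<in> W \<and> P i"
  then show "hpath w ! i \<in> hpath_set W P" unfolding hpath_set_def using assms(3) by auto
qed

lemma hpath_setE:
  assumes "x \<in> hpath_set W P" "W \<subseteq> C"
  obtains w i where "w \<in> W" "w \<in> C" "i < length (hpath w)" "P i" "x = hpath w ! i"
proof -
  from assms(1) obtain w i where "w \<in> W" "i < length (hpath w)" "P i" "x = hpath w ! i"
    unfolding hpath_set_def by blast
  then show thesis using that assms(2) by blast
qed

lemma hpath_set_True:
  assumes "W \<subseteq> C"
  shows "hpath_set W (\<lambda>_. True) = (\<Union>w\<in>W. desc S E r w)"
proof (intro set_eqI iffI)
  fix x assume "x \<in> hpath_set W (\<lambda>_. True)"
  then obtain w i where "w \<in> W" "w \<in> C" "i < length (hpath w)" "x = hpath w ! i"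
    using assms by (elim hpath_setE)
  then show "x \<in> (\<Union>w\<in>W. desc S E r w)" using hpath_nth(1) by blast
next
  fix x assume "x \<in> (\<Union>w\<in>W. desc S E r w)"
  then obtain w where w: "w \<in> W" "x \<in> set (hpath w)" using hpath(3) assms by blast
  then obtain i where "i < length (hpath w)" "x = hpath w ! i" by (metis in_set_conv_nth)
  then show "x \<in> hpath_set W (\<lambda>_. True)" unfolding hpath_set_def using w(1) by blast
qed

lemma hpath_set_subset_True: "hpath_set W P \<subseteq> hpath_set W (\<lambda>_. True)"
  unfolding hpath_set_def by blast

lemma desc_u_eq: "desc S E r u = insert u (hpath_set C (\<lambda>_. True))"
  using desc_eq_insert_children[OF u_vertex] hpath_set_True[OF order_refl] by simp

lemma u_notin_hpath_set: "W \<subseteq> C \<Longrightarrow> u \<notin> hpath_set W P"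
  using hpath_nth(4) by (metis hpath_setE)

lemma hpath_set_Diff:
  assumes "W \<subseteq> C"
  shows "hpath_set W (\<lambda>_. True) - hpath_set W P = hpath_set W (\<lambda>i. \<not> P i)"
proof (intro set_eqI iffI)
  fix x assume x: "x \<in> hpath_set W (\<lambda>_. True) - hpath_set W P"
  then have "x \<in> hpath_set W (\<lambda>_. True)" by blast
  then obtain w i where "w \<in> W" "w \<in> C" "i < length (hpath w)" "x = hpath w ! i"
    using assms by (elim hpath_setE)
  then show "x \<in> hpath_set W (\<lambda>i. \<not> P i)" using x hpath_set_iff[OF assms] by auto
next
  fix x assume "x \<in> hpath_set W (\<lambda>i. \<not> P i)"
  then obtain w i where "w \<in> W" "w \<in> C" "i < length (hpath w)" "\<not> P i" "x = hpath w ! i"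
    using assms by (elim hpath_setE)
  then show "x \<in> hpath_set W (\<lambda>_. True) - hpath_set W P" using hpath_set_iff[OF assms] by auto
qed

lemma finite_hpath_indices:
  "W \<subseteq> C \<Longrightarrow> finite {(w, i). w \<in> W \<and> i < length (hpath w) \<and> P i}"
  by (rule finite_subset[of _ "Sigma C (\<lambda>w. {..<length (hpath w)})"])
    (use finite_children in auto)

lemma card_hpath_set_le:
  assumes "W \<subseteq> C"
  shows "card (hpath_set W P) \<le> card {(w, i). w \<in> W \<and> i < length (hpath w) \<and> P i}"
proof -
  have "hpath_set W P = (\<lambda>(w, i). hpath w ! i) ` {(w, i). w \<in> W \<and> i < length (hpath w) \<and> P i}"
    unfolding hpath_set_def by auto
  then show ?thesis using card_image_le[OF finite_hpath_indices[OF assms]] by simp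
qed

lemma parent_hpath_set:
  assumes "W \<subseteq> C" "y \<in> hpath_set W (\<lambda>i. i mod 3 \<noteq> 0)"
  shows "y \<noteq> r" "parent y \<in> hpath_set W (\<lambda>_. True)"
proof -
  obtain w i where wi: "w \<in> W" "w \<in> C" "i < length (hpath w)" "i mod 3 \<noteq> 0" "y = hpath w ! i"
    using assms by (elim hpath_setE)
  then show "y \<noteq> r" using hpath_nth(3)[OF wi(2,3)] by simp
  have "parent y = hpath w ! (i - 1)" using parent_hpath_nth[OF wi(2,3)] wi(4,5) by auto
  moreover have "i - 1 < length (hpath w)" using wi(3) by simp
  ultimately show "parent y \<in> hpath_set W (\<lambda>_. True)"
    using wi(1) unfolding hpath_set_def by blast
qed

text \<open>A vertex kept by the pattern has its predecessor or its successor on the hanging path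
  deleted, so it has at most one kept neighbour (u itself is never kept).\<close>
lemma dissociation_set_hpath_set_mod3:
  assumes W: "W \<subseteq> C" and "\<rho> < 3"
  shows "dissociation_set S E (hpath_set W (\<lambda>i. i mod 3 \<noteq> \<rho>))"
  unfolding dissociation_set_def
proof (intro conjI ballI)
  let ?F = "hpath_set W (\<lambda>i. i mod 3 \<noteq> \<rho>)"
  show "?F \<subseteq> S" using hpath_nth(2) W by (auto elim: hpath_setE)
  fix x assume "x \<in> ?F"
  then obtain w i where wi: "w \<in> W" "w \<in> C" "i < length (hpath w)" "i mod 3 \<noteq> \<rho>"
    "x = hpath w ! i"
    using W by (elim hpath_setE)
  define p where "p = (if i = 0 then u else hpath w ! (i - 1))"
  have nb: "y = p \<or> (Suc i < length (hpath w) \<and> y = hpath w ! Suc i)" if "{x, y} \<in> E" for y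
    using that neighbours_hpath_nth[OF wi(2,3)] wi(5) unfolding p_def by (auto split: if_splits)
  have kept: "hpath w ! k \<in> ?F \<longleftrightarrow> k mod 3 \<noteq> \<rho>" if "k < length (hpath w)" for k
    using hpath_set_iff[OF W wi(2) that] wi(1) by simp
  have "\<exists>z. {y \<in> ?F. {x, y} \<in> E} \<subseteq> {z}"
  proof (cases "Suc i mod 3 = \<rho>")
    case True
    then have "{y \<in> ?F. {x, y} \<in> E} \<subseteq> {p}" using nb kept by blast
    then show ?thesis by blast
  next
    case False
    have "p \<notin> ?F"
    proof (cases i)
      case 0
      have "u \<notin> ?F" using hpath_nth(4) W by (metis hpath_setE)
      then show ?thesis using 0 unfolding p_def by simp
    next
      case (Suc j)
      then have "j mod 3 = \<rho>" using wi(4) False \<open>\<rho> < 3\<close> by (auto simp: mod_Suc split: if_splits)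
      then show ?thesis using kept[of j] wi(3) Suc unfolding p_def by simp
    qed
    then have "{y \<in> ?F. {x, y} \<in> E} \<subseteq> {hpath w ! Suc i}" using nb by blast
    then show ?thesis by blast
  qed
  then obtain z where "{y \<in> ?F. {x, y} \<in> E} \<subseteq> {z}" by blast
  then have "card {y \<in> ?F. {x, y} \<in> E} \<le> card {z}" by (intro card_mono) auto
  then show "card {y \<in> ?F. {x, y} \<in> E} \<le> 1" by simp
qed

definition triple :: "'a \<Rightarrow> nat \<Rightarrow> 'a set" where
  "triple w j = {hpath w ! j, hpath w ! Suc j, hpath w ! Suc (Suc j)}"

lemma is_P3_triple:
  assumes "w \<in> C" "j + 2 < length (hpath w)"
  shows "is_P3 E (triple w j)"
  unfolding is_P3_def triple_def
proof (intro exI conjI)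
  show "hpath w ! j \<noteq> hpath w ! Suc (Suc j)"
    using nth_eq_iff_index_eq[OF hpath(2)[OF assms(1)], of j "Suc (Suc j)"] assms(2) by simp
  show "{hpath w ! j, hpath w ! Suc j} \<in> E" "{hpath w ! Suc j, hpath w ! Suc (Suc j)} \<in> E"
    using edge_hpath[OF assms(1)] assms(2) by simp_all
qed (rule refl)

lemma triple_subset:
  "w \<in> C \<Longrightarrow> j + 2 < length (hpath w) \<Longrightarrow> triple w j \<subseteq> desc S E r w"
  unfolding triple_def using hpath_nth(1) by simp

lemma triple_elem:
  "x \<in> triple w j \<Longrightarrow> \<exists>k. j \<le> k \<and> k \<le> j + 2 \<and> x = hpath w ! k"
  unfolding triple_def by (auto intro: exI[of _ j] exI[of _ "Suc j"] exI[of _ "Suc (Suc j)"])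

lemma triples_disjoint:
  assumes "w \<in> C" "w' \<in> C" "j + 2 < length (hpath w)" "j' + 2 < length (hpath w')"
    and "w = w' \<Longrightarrow> j + 3 \<le> j' \<or> j' + 3 \<le> j"
  shows "triple w j \<inter> triple w' j' = {}"
proof (rule ccontr)
  assume "triple w j \<inter> triple w' j' \<noteq> {}"
  then obtain k k' where "j \<le> k" "k \<le> j + 2" "j' \<le> k'" "k' \<le> j' + 2"
    "hpath w ! k = hpath w' ! k'"
    using triple_elem by (metis disjoint_iff)
  moreover have "k < length (hpath w)" "k' < length (hpath w')"
    using assms(3,4) \<open>k \<le> j + 2\<close> \<open>k' \<le> j' + 2\<close> by linarith+
  ultimately have "w = w'" "k = k'" using hpath_nth_eqD[OF assms(1,2)] by blast+
  then show False using assms(5) \<open>j \<le> k\<close> \<open>k \<le> j + 2\<close> \<open>j' \<le> k'\<close> \<open>k' \<le> j' + 2\<close> by linarith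
qed

section \<open>Pruning steps\<close>

lemma shifted_triples_disjoint:
  assumes "w \<in> C" "i mod 3 = 2" "s \<le> 2" "i - s + 2 < length (hpath w)"
    and "w' \<in> C" "i' mod 3 = 2" "s' \<le> 2" "i' - s' + 2 < length (hpath w')"
    and "(w, i) \<noteq> (w', i')" "w = w' \<Longrightarrow> s = s'"
  shows "triple w (i - s) \<inter> triple w' (i' - s') = {}"
proof (rule triples_disjoint[OF assms(1,5,4,8)])
  assume "w = w'"
  then have "i + 3 \<le> i' \<or> i' + 3 \<le> i" "s = s'"
    using mod_3_eq_far_apart[of i i'] assms(2,6,9,10) by simp_all
  moreover have "2 \<le> i" "2 \<le> i'" using assms(2,6) by presburger+
  ultimately show "i - s + 3 \<le> i' - s' \<or> i' - s' + 3 \<le> i - s" using assms(3) by linarith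
qed

text \<open>The vertices deleted from T_u, namely u and the vertices at positions 2 mod 3 on the
  hanging paths, are covered by disjoint P3s: N through u, and on the hanging path of w the
  triples starting sh w positions before a deleted vertex.\<close>
lemma card_Int_desc_u_le:
  fixes sh :: "'a \<Rightarrow> nat" and N :: "'a set"
  assumes sh: "\<And>w i. w \<in> C \<Longrightarrow> i < length (hpath w) \<Longrightarrow> i mod 3 = 2 \<Longrightarrow>
      sh w \<le> 2 \<and> i - sh w + 2 < length (hpath w)"
    and N: "is_P3 E N" "N \<subseteq> desc S E r u"
    and N_low: "\<And>w k. w \<in> C \<Longrightarrow> k < length (hpath w) \<Longrightarrow> hpath w ! k \<in> N \<Longrightarrow> k + sh w < 2"
    and F: "dissociation_set S E F"
  shows "card (F \<inter> desc S E r u) \<le> card (hpath_set C (\<lambda>i. i mod 3 \<noteq> 2))"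
proof -
  define J where "J = {(w, i). w \<in> C \<and> i < length (hpath w) \<and> i mod 3 = 2}"
  define T where "T k = (case k of None \<Rightarrow> N | Some (w, i) \<Rightarrow> triple w (i - sh w))" for k
  have J: "w \<in> C" "i < length (hpath w)" "i mod 3 = 2" "sh w \<le> 2" "i - sh w + 2 < length (hpath w)"
    if "(w, i) \<in> J" for w i
    using that sh unfolding J_def by auto
  have "finite J" unfolding J_def by (rule finite_hpath_indices) simp
  have triple_N: "triple w (i - sh w) \<inter> N = {}" if "(w, i) \<in> J" for w i
  proof -
    { fix x assume x: "x \<in> triple w (i - sh w)" "x \<in> N"
      obtain m where m: "i - sh w \<le> m" "m \<le> i - sh w + 2" "x = hpath w ! m"
        using triple_elem[OF x(1)] by blast
      have "m < length (hpath w)" using m(2) J(5)[OF that] by linarith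
      then have "m + sh w < 2" using N_low[OF J(1)[OF that]] m(3) x(2) by blast
      moreover have "2 \<le> i" using J(3)[OF that] by presburger
      ultimately have False using m(1) J(4)[OF that] by linarith }
    then show ?thesis by blast
  qed
  have triple_triple: "triple w (i - sh w) \<inter> triple w' (i' - sh w') = {}"
    if "(w, i) \<in> J" "(w', i') \<in> J" "(w, i) \<noteq> (w', i')" for w i w' i'
    by (rule shifted_triples_disjoint[OF J(1,3,4,5)[OF that(1)] J(1,3,4,5)[OF that(2)] that(3)])
      simp
  let ?I = "insert None (Some ` J)"
  show ?thesis
  proof (rule card_Int_dissociation_set_le[OF F finite_vertices, where I = ?I and T = T])
    show "hpath_set C (\<lambda>i. i mod 3 \<noteq> 2) \<subseteq> desc S E r u"
      using desc_u_eq hpath_set_subset_True by (metis subset_insertI2)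
    show "desc S E r u \<subseteq> S" by (rule desc_subset_vertices)
    show "finite ?I" using \<open>finite J\<close> by simp
    have "desc S E r u - hpath_set C (\<lambda>i. i mod 3 \<noteq> 2) = insert u (hpath_set C (\<lambda>i. \<not> i mod 3 \<noteq> 2))"
      using desc_u_eq hpath_set_Diff[OF order_refl, of "\<lambda>i. i mod 3 \<noteq> 2"]
        u_notin_hpath_set[OF order_refl]
      by auto
    also have "card \<dots> \<le> Suc (card (hpath_set C (\<lambda>i. \<not> i mod 3 \<noteq> 2)))"
      by (rule card_insert_le_m1) simp_all
    also have "card (hpath_set C (\<lambda>i. \<not> i mod 3 \<noteq> 2)) \<le> card J"
      unfolding J_def using card_hpath_set_le[OF order_refl, of "\<lambda>i. \<not> i mod 3 \<noteq> 2"] by simp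
    also have "Suc (card J) = card ?I" using \<open>finite J\<close> by (simp add: card_image)
    finally show "card (desc S E r u - hpath_set C (\<lambda>i. i mod 3 \<noteq> 2)) \<le> card ?I"
      by simp
  next
    fix k assume "k \<in> ?I"
    then consider "k = None" | w i where "k = Some (w, i)" "(w, i) \<in> J" by force
    then have "is_P3 E (T k) \<and> T k \<subseteq> desc S E r u"
    proof cases
      case 2
      then show ?thesis
        using is_P3_triple[OF J(1,5)] triple_subset[OF J(1,5)] desc_child_subset[OF J(1)]
        by (simp add: T_def) blast
    qed (use N in \<open>simp add: T_def\<close>)
    then show "is_P3 E (T k)" "T k \<subseteq> desc S E r u" by simp_all
  next
    fix k k' assume k: "k \<in> ?I" "k' \<in> ?I" "k \<noteq> k'"
    show "T k \<inter> T k' = {}"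
    proof (cases k)
      case None
      then obtain w' i' where "k' = Some (w', i')" "(w', i') \<in> J" using k by auto
      then show ?thesis using None triple_N by (auto simp: T_def)
    next
      case (Some p)
      then obtain w i where wi: "k = Some (w, i)" "(w, i) \<in> J" using k by (cases p) auto
      show ?thesis
      proof (cases k')
        case None
        then show ?thesis using wi triple_N by (auto simp: T_def)
      next
        case (Some q)
        then obtain w' i' where "k' = Some (w', i')" "(w', i') \<in> J" using k by (cases q) auto
        then show ?thesis using wi triple_triple k(3) by (simp add: T_def)
      qed
    qed
  qed
qed

lemma card_Int_desc_u_le_of_C2:
  assumes w0: "w0 \<in> C" "length (hpath w0) mod 3 = 2" and F: "dissociation_set S E F"
  shows "card (F \<inter> desc S E r u) \<le> card (hpath_set C (\<lambda>i. i mod 3 \<noteq> 2))"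
proof (rule card_Int_desc_u_le[OF _ _ _ _ F, where sh = "\<lambda>w. if w = w0 then 0 else 2"])
  have len: "Suc 0 < length (hpath w0)" using w0(2) by presburger
  show "is_P3 E {u, hpath w0 ! 0, hpath w0 ! 1}"
    unfolding is_P3_def
    using hpath_nth(4)[OF w0(1) len] edge_u_hpath[OF w0(1)] edge_hpath[OF w0(1), of 0] len by auto
  show "{u, hpath w0 ! 0, hpath w0 ! 1} \<subseteq> desc S E r u"
  proof -
    have "hpath w0 ! 0 \<in> desc S E r w0" "hpath w0 ! 1 \<in> desc S E r w0"
      using hpath_nth(1)[OF w0(1), of 0] hpath_nth(1)[OF w0(1), of 1] hpath(1)[OF w0(1)] len
      by simp_all
    then show ?thesis using self_in_desc[OF u_vertex] desc_child_subset[OF w0(1)] by blast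
  qed
  fix w i assume wi: "w \<in> C" "i < length (hpath w)"
  show "k + (if w = w0 then 0 else 2) < 2" if "hpath w ! k \<in> {u, hpath w0 ! 0, hpath w0 ! 1}"
    and "k < length (hpath w)" for k
    using that hpath_nth(4)[OF wi(1)] hpath_nth_eqD[OF wi(1) w0(1) that(2), of 0]
      hpath_nth_eqD[OF wi(1) w0(1) that(2), of 1] hpath(1)[OF w0(1)] len by auto
  assume i: "i mod 3 = 2"
  show "(if w = w0 then 0 else 2) \<le> (2::nat) \<and> i - (if w = w0 then 0 else 2) + 2 < length (hpath w)"
  proof (cases "w = w0")
    case True
    then have "i + 2 < length (hpath w)" using wi(2) w0(2) i by presburger
    then show ?thesis using True by simp
  next
    case False
    have "2 \<le> i" using i by presburger
    then show ?thesis using False wi(2) by simp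
  qed
qed

lemma card_Int_desc_u_le_of_two_C1:
  assumes w: "w1 \<in> C" "w2 \<in> C" "w1 \<noteq> w2"
    "length (hpath w1) mod 3 = 1" "length (hpath w2) mod 3 = 1"
    and F: "dissociation_set S E F"
  shows "card (F \<inter> desc S E r u) \<le> card (hpath_set C (\<lambda>i. i mod 3 \<noteq> 2))"
proof (rule card_Int_desc_u_le[OF _ _ _ _ F, where sh = "\<lambda>w. if w = w1 \<or> w = w2 then 1 else 2"])
  have len: "0 < length (hpath w1)" "0 < length (hpath w2)" using hpath(1) w(1,2) by auto
  show "is_P3 E {hpath w1 ! 0, u, hpath w2 ! 0}"
    unfolding is_P3_def
    using hpath_nth_eqD[OF w(1,2) len] w(3) edge_u_hpath[OF w(1)] edge_u_hpath[OF w(2)]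
    by (intro exI[of _ "hpath w1 ! 0"] exI[of _ u] exI[of _ "hpath w2 ! 0"])
      (auto simp: insert_commute)
  show "{hpath w1 ! 0, u, hpath w2 ! 0} \<subseteq> desc S E r u"
    using self_in_desc[OF u_vertex] hpath_nth(1)[OF w(1) len(1)] hpath_nth(1)[OF w(2) len(2)]
      desc_child_subset[OF w(1)] desc_child_subset[OF w(2)] by auto
  fix v i assume vi: "v \<in> C" "i < length (hpath v)"
  show "k + (if v = w1 \<or> v = w2 then 1 else 2) < 2"
    if "hpath v ! k \<in> {hpath w1 ! 0, u, hpath w2 ! 0}"
    and "k < length (hpath v)" for k
    using that hpath_nth(4)[OF vi(1)] hpath_nth_eqD[OF vi(1) w(1) that(2) len(1)]
      hpath_nth_eqD[OF vi(1) w(2) that(2) len(2)] by auto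
  assume i: "i mod 3 = 2"
  show "(if v = w1 \<or> v = w2 then 1 else 2) \<le> (2::nat) \<and>
      i - (if v = w1 \<or> v = w2 then 1 else 2) + 2 < length (hpath v)"
  proof (cases "v = w1 \<or> v = w2")
    case True
    then have "length (hpath v) mod 3 = 1" using w(4,5) by auto
    then have "i + 1 < length (hpath v)" using vi(2) i by presburger
    then show ?thesis using True i by simp
  next
    case False
    have "2 \<le> i" using i by presburger
    then show ?thesis using False vi(2) by simp
  qed
qed

lemma max_diss_root_values_Diff_desc_u:
  assumes "(\<exists>w\<in>C. length (hpath w) mod 3 = 2) \<or>
    (\<exists>w1\<in>C. \<exists>w2\<in>C. w1 \<noteq> w2 \<and> length (hpath w1) mod 3 = 1 \<and> length (hpath w2) mod 3 = 1)"
  shows "max_diss_root_values (S - desc S E r u) (ind E (S - desc S E r u)) r =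
    max_diss_root_values S E r"
proof (rule max_diss_root_values_Diff[OF finite_vertices desc_subset_vertices])
  let ?FX = "hpath_set C (\<lambda>i. i mod 3 \<noteq> 2)"
  show "r \<notin> desc S E r u" using root_in_desc u_not_root by blast
  show FX: "?FX \<subseteq> desc S E r u"
    using desc_u_eq hpath_set_subset_True by (metis subset_insertI2)
  show "card (F \<inter> desc S E r u) \<le> card ?FX" if "dissociation_set S E F" for F
    using assms card_Int_desc_u_le_of_C2[OF _ _ that]
      card_Int_desc_u_le_of_two_C1[OF _ _ _ _ _ that]
    by blast
  show "dissociation_set S E (F' \<union> ?FX)"
    if "dissociation_set (S - desc S E r u) (ind E (S - desc S E r u)) F'" for F'
  proof (rule dissociation_set_Un_desc_closed[OF desc_subset_vertices _ _ FX _ that])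
    show "\<forall>a\<in>desc S E r u. desc S E r a \<subseteq> desc S E r u" using desc_subset_desc by blast
    show "dissociation_set S E ?FX" by (rule dissociation_set_hpath_set_mod3) simp_all
    show "\<forall>y\<in>?FX. y \<noteq> r \<and> parent y \<in> desc S E r u"
      using FX u_notin_hpath_set[OF order_refl] parent_in_desc by blast
  qed
qed

lemma max_diss_root_values_Diff_desc_siblings:
  assumes z: "z \<in> C" and others: "\<forall>w\<in>C - {z}. length (hpath w) mod 3 = 0"
  defines "X \<equiv> \<Union>w\<in>C - {z}. desc S E r w"
  shows "max_diss_root_values (S - X) (ind E (S - X)) r = max_diss_root_values S E r"
proof -
  let ?W = "C - {z}"
  let ?FX = "hpath_set ?W (\<lambda>i. i mod 3 \<noteq> 0)"
  have W: "?W \<subseteq> C" by blast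
  have X_eq: "X = hpath_set ?W (\<lambda>_. True)" unfolding X_def using hpath_set_True[OF W] by simp
  have X_sub: "X \<subseteq> S" unfolding X_def using desc_subset_vertices by blast
  have FX: "?FX \<subseteq> X" unfolding X_eq by (rule hpath_set_subset_True)
  show ?thesis
  proof (rule max_diss_root_values_Diff[OF finite_vertices X_sub _ FX])
    show "r \<notin> X" unfolding X_def using root_in_desc child_of_u(2) by blast
  next
    fix F assume F: "dissociation_set S E F"
    define J where "J = {(w, i). w \<in> ?W \<and> i < length (hpath w) \<and> \<not> i mod 3 \<noteq> 0}"
    have J: "w \<in> C" "w \<noteq> z" "i mod 3 = 0" "i + 2 < length (hpath w)" if "(w, i) \<in> J" for w i
    proof -
      show "w \<in> C" "w \<noteq> z" "i mod 3 = 0" using that by (auto simp: J_def)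
      have "length (hpath w) mod 3 = 0" "i < length (hpath w)"
        using that others by (auto simp: J_def)
      then show "i + 2 < length (hpath w)" using \<open>i mod 3 = 0\<close> by presburger
    qed
    show "card (F \<inter> X) \<le> card ?FX"
    proof (rule card_Int_dissociation_set_le[OF F finite_vertices FX X_sub,
        where T = "\<lambda>(w, i). triple w i"])
      show "finite J" unfolding J_def by (rule finite_hpath_indices[OF W])
      have "X - ?FX = hpath_set ?W (\<lambda>i. \<not> i mod 3 \<noteq> 0)"
        unfolding X_eq by (rule hpath_set_Diff[OF W])
      then show "card (X - ?FX) \<le> card J" unfolding J_def using card_hpath_set_le[OF W] by simp
    next
      fix k assume "k \<in> J"
      then obtain w i where wi: "k = (w, i)" "(w, i) \<in> J" by (cases k) auto
      then show "is_P3 E (case k of (w, i) \<Rightarrow> triple w i)" "(case k of (w, i) \<Rightarrow> triple w i) \<subseteq> X"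
        using is_P3_triple[OF J(1,4)[OF wi(2)]] triple_subset[OF J(1,4)[OF wi(2)]] J(1,2)[OF wi(2)]
        unfolding X_def by auto
    next
      fix k k' assume k: "k \<in> J" "k' \<in> J" "k \<noteq> k'"
      obtain w i w' i' where wi: "k = (w, i)" "k' = (w', i')" by (cases k, cases k')
      have wiJ: "(w, i) \<in> J" "(w', i') \<in> J" using k wi by simp_all
      have "triple w i \<inter> triple w' i' = {}"
      proof (rule triples_disjoint[OF J(1)[OF wiJ(1)] J(1)[OF wiJ(2)]
          J(4)[OF wiJ(1)] J(4)[OF wiJ(2)]])
        show "i + 3 \<le> i' \<or> i' + 3 \<le> i" if "w = w'"
          using mod_3_eq_far_apart[of i i'] J(3)[OF wiJ(1)] J(3)[OF wiJ(2)] k(3) wi that by auto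
      qed
      then show "(case k of (w, i) \<Rightarrow> triple w i) \<inter> (case k' of (w, i) \<Rightarrow> triple w i) = {}"
        using wi by simp
    qed
  next
    fix F' assume F': "dissociation_set (S - X) (ind E (S - X)) F'"
    show "dissociation_set S E (F' \<union> ?FX)"
    proof (rule dissociation_set_Un_desc_closed[OF X_sub _ _ FX _ F'])
      show "\<forall>a\<in>X. desc S E r a \<subseteq> X" unfolding X_def using desc_subset_desc by blast
      show "dissociation_set S E ?FX" by (rule dissociation_set_hpath_set_mod3[OF W]) simp
      show "\<forall>y\<in>?FX. y \<noteq> r \<and> parent y \<in> X" unfolding X_eq using parent_hpath_set[OF W] by blast
    qed
  qed
qed

lemma children_mod_eq: "children_mod S E r u i = {w \<in> C. length (hpath w) mod 3 = i}"
  using length_hpath by (auto simp: children_mod_def)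

lemma hpath_lengths_of_C2_or_two_C1:
  assumes "card (children_mod S E r u 2) \<ge> 1 \<or> card (children_mod S E r u 1) \<ge> 2"
  shows "(\<exists>w\<in>C. length (hpath w) mod 3 = 2) \<or>
    (\<exists>w1\<in>C. \<exists>w2\<in>C. w1 \<noteq> w2 \<and> length (hpath w1) mod 3 = 1 \<and> length (hpath w2) mod 3 = 1)"
proof (cases "children_mod S E r u 2 = {}")
  case False
  then show ?thesis unfolding children_mod_eq by blast
next
  case True
  then have "\<not> card (children_mod S E r u 1) \<le> 1" using assms by simp
  then obtain a b where "a \<in> children_mod S E r u 1" "b \<in> children_mod S E r u 1" "a \<noteq> b"
    using card_le_Suc0_iff_eq[of "children_mod S E r u 1"] finite_children
    by (auto simp: children_mod_def)
  then show ?thesis unfolding children_mod_eq by blast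
qed

lemma hpath_lengths_of_no_C2:
  assumes "card (children_mod S E r u 2) = 0" "card (children_mod S E r u 1) \<le> 1"
    and "card (children_mod S E r u 1) = 1 \<longrightarrow> children_mod S E r u 1 = {z}"
  shows "\<forall>w\<in>C - {z}. length (hpath w) mod 3 = 0"
proof
  fix w assume w: "w \<in> C - {z}"
  have fin: "finite (children_mod S E r u i)" for i
    using finite_children by (simp add: children_mod_def)
  have "w \<notin> children_mod S E r u 2" using assms(1) fin[of 2] by simp
  moreover have "w \<notin> children_mod S E r u 1"
  proof
    assume w1: "w \<in> children_mod S E r u 1"
    then have "card (children_mod S E r u 1) = 1" using assms(2) fin[of 1]
      by (metis card_0_eq empty_iff le_antisym less_one not_le)
    then show False using assms(3) w w1 by blast
  qed
  ultimately show "length (hpath w) mod 3 = 0" unfolding children_mod_eq using w by auto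
qed

lemma prune_at_u_max_diss_root_values:
  assumes "((card (children_mod S E r u 2) \<ge> 1 \<or> card (children_mod S E r u 1) \<ge> 2) \<and>
        S' = S - desc S E r u) \<or>
      (card (children_mod S E r u 2) = 0 \<and> card (children_mod S E r u 1) \<le> 1 \<and>
        (\<exists>z\<in>C. (card (children_mod S E r u 1) = 1 \<longrightarrow> children_mod S E r u 1 = {z}) \<and>
          S' = S - (\<Union>w\<in>C - {z}. desc S E r w)))"
  shows "\<exists>X. S' = S - X \<and> r \<notin> X \<and> (\<forall>a\<in>X. desc S E r a \<subseteq> X) \<and>
    max_diss_root_values (S - X) (ind E (S - X)) r = max_diss_root_values S E r"
  using assms
proof (elim disjE)
  assume A: "(card (children_mod S E r u 2) \<ge> 1 \<or> card (children_mod S E r u 1) \<ge> 2) \<and>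
    S' = S - desc S E r u"
  show ?thesis
  proof (intro exI conjI)
    show "S' = S - desc S E r u" using A by blast
    show "r \<notin> desc S E r u" using root_in_desc u_not_root by blast
    show "\<forall>a\<in>desc S E r u. desc S E r a \<subseteq> desc S E r u" using desc_subset_desc by blast
    show "max_diss_root_values (S - desc S E r u) (ind E (S - desc S E r u)) r =
        max_diss_root_values S E r"
      using A hpath_lengths_of_C2_or_two_C1 max_diss_root_values_Diff_desc_u by blast
  qed
next
  assume "card (children_mod S E r u 2) = 0 \<and> card (children_mod S E r u 1) \<le> 1 \<and>
    (\<exists>z\<in>C. (card (children_mod S E r u 1) = 1 \<longrightarrow> children_mod S E r u 1 = {z}) \<and>
      S' = S - (\<Union>w\<in>C - {z}. desc S E r w))"
  then obtain z where B: "card (children_mod S E r u 2) = 0" "card (children_mod S E r u 1) \<le> 1"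
    "z \<in> C" "card (children_mod S E r u 1) = 1 \<longrightarrow> children_mod S E r u 1 = {z}"
    and S': "S' = S - (\<Union>w\<in>C - {z}. desc S E r w)"
    by blast
  let ?X = "\<Union>w\<in>C - {z}. desc S E r w"
  show ?thesis
  proof (intro exI conjI)
    show "S' = S - ?X" by (rule S')
    show "r \<notin> ?X" using root_in_desc child_of_u(2) by blast
    show "\<forall>a\<in>?X. desc S E r a \<subseteq> ?X" using desc_subset_desc by blast
    show "max_diss_root_values (S - ?X) (ind E (S - ?X)) r = max_diss_root_values S E r"
      by (rule max_diss_root_values_Diff_desc_siblings[OF B(3) hpath_lengths_of_no_C2[OF B(1,2,4)]])
  qed
qed

end

lemma ind_ind: "S' \<subseteq> S \<Longrightarrow> ind (ind E S) S' = ind E S'"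
  by (auto simp: ind_def)

lemma prune_step_max_diss_root_values:
  assumes T: "rooted_tree S (ind E0 S) r" and step: "prune_step E0 r S S'"
  shows "rooted_tree S' (ind E0 S') r \<and>
    max_diss_root_values S' (ind E0 S') r = max_diss_root_values S (ind E0 S) r"
proof -
  let ?E = "ind E0 S"
  obtain u where u: "u \<in> S" "u \<noteq> r"
      "\<forall>u'\<in>S. u' \<noteq> r \<and> deg ?E u' \<ge> 3 \<longrightarrow> dist S ?E r u' \<le> dist S ?E r u"
    and pruned: "((card (children_mod S ?E r u 2) \<ge> 1 \<or> card (children_mod S ?E r u 1) \<ge> 2) \<and>
        S' = S - desc S ?E r u) \<or>
      (card (children_mod S ?E r u 2) = 0 \<and> card (children_mod S ?E r u 1) \<le> 1 \<and>
        (\<exists>z\<in>children S ?E r u.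
          (card (children_mod S ?E r u 1) = 1 \<longrightarrow> children_mod S ?E r u 1 = {z}) \<and>
          S' = S - (\<Union>w\<in>children S ?E r u - {z}. desc S ?E r w)))"
    using step unfolding prune_step_def Let_def by blast
  interpret deepest_branch S ?E r u
    using T u unfolding deepest_branch_def deepest_branch_axioms_def by blast
  obtain X where X: "S' = S - X" "r \<notin> X" "\<forall>a\<in>X. desc S ?E r a \<subseteq> X"
    and same_values: "max_diss_root_values (S - X) (ind ?E (S - X)) r = max_diss_root_values S ?E r"
    using prune_at_u_max_diss_root_values[OF pruned] by blast
  have "S' \<subseteq> S" using X(1) by blast
  then have "ind ?E S' = ind E0 S'" by (rule ind_ind)
  moreover have "rooted_tree (S - X) (ind ?E (S - X)) r" using rooted_tree_Diff X(2,3) by blast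
  ultimately show ?thesis using same_values X(1) by simp
qed

lemma rooted_tree_of_is_tree:
  assumes "is_tree V E" "v \<in> V"
  shows "rooted_tree V E v"
proof
  show "finite V" "\<forall>e\<in>E. \<exists>a b. a \<noteq> b \<and> a \<in> V \<and> b \<in> V \<and> e = {a, b}"
    using assms(1) unfolding is_tree_def simple_graph_def by blast+
  show "\<not> (\<exists>c. is_cycle V E c)" using assms(1) unfolding is_tree_def by blast
  show "\<forall>a\<in>V. \<exists>ps. is_path V E ps \<and> hd ps = v \<and> last ps = a"
    using assms unfolding is_tree_def connected_graph_def by blast
qed (rule assms(2))

lemma ind_vertices:
  assumes "simple_graph V E"
  shows "ind E V = E"
proof -
  have "e \<subseteq> V" if "e \<in> E" for e
  proof -
    have "\<exists>a b. a \<noteq> b \<and> a \<in> V \<and> b \<in> V \<and> e = {a, b}"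
      using assms that by (simp add: simple_graph_def)
    then show ?thesis by auto
  qed
  then show ?thesis by (auto simp: ind_def)
qed

theorem lemma3p1:
  fixes V :: "'a set" and E :: "'a set set" and v :: 'a and S :: "'a set"
  assumes "is_tree V E" and "v \<in> V" and "is_pruning V E v S"
  shows "(\<forall>Fb. max_dissociation_set S (ind E S) Fb \<longrightarrow>
            (\<exists>F. max_dissociation_set V E F \<and> (v \<in> F \<longleftrightarrow> v \<in> Fb)))
       \<and> (\<forall>F. max_dissociation_set V E F \<longrightarrow>
            (\<exists>Fb. max_dissociation_set S (ind E S) Fb \<and> (v \<in> Fb \<longleftrightarrow> v \<in> F)))"
proof -
  have "simple_graph V E" using assms(1) by (simp add: is_tree_def)
  then have ind_V: "ind E V = E" by (rule ind_vertices)
  have "(prune_step E v)\<^sup>*\<^sup>* V S" using assms(3) by (simp add: is_pruning_def)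
  then have "rooted_tree S (ind E S) v \<and>
      max_diss_root_values S (ind E S) v = max_diss_root_values V E v"
  proof (induction rule: rtranclp_induct)
    case base
    show ?case using rooted_tree_of_is_tree[OF assms(1,2)] ind_V by simp
  next
    case (step S S')
    then show ?case
      using prune_step_max_diss_root_values[OF conjunct1[OF step.IH] step.hyps(2)] by simp
  qed
  then have "max_diss_root_values S (ind E S) v = max_diss_root_values V E v" by blast
  then show ?thesis by (simp only: max_diss_root_values_eq_iff)
qed

end
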